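(* Let $k\ge 3$, $n_1=\cdots=n_k\ge 2$, and let $G,G'\in\mathcal{O}(K_{n_1,\dots,n_k})$. Suppose that $G$ and $G'$ belong to the same one of the following three classes: (Case 1) $G=\Gamma(\text{complete};\ t_i=\mathrm{ss}\text{ for }i\in I,\ t_i=\mathrm{sc}\text{ for }i\notin I)$ for some $I\subseteq[k]$; (Case 2) $G=\Gamma(\text{star toward }j;\ t_j=\mathrm{sc},\ t_i=\mathrm{ss}\text{ for }i\in I,\ t_i=\mathrm{c}\text{ for }i\notin I\cup\{j\})$ for some $j\in[k]$ and $I\subseteq[k]\setminus\{j\}$; (Case 3) the same as Case 2 but with $t_j=\mathrm{c}$; and similarly $G'$ with index set $I'$ (and possibly a different index $j'$). If $|I|=|I'|$, then $G$ and $G'$ are isomorphic.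
   Context: $V=U_1\sqcup\cdots\sqcup U_k$, $|U_i|=n_i$; $K_{n_1,\dots,n_k}$ has edges exactly between different parts. The local complement $c_v(G)$ complements the edges among the neighbours of $v$; $\mathcal{O}(G)$ is the set of graphs on $V$ obtainable from $G$ by finite sequences of local complements. Graph family $\Gamma$: each $i$ gets a type $t_i\in\{\mathrm{c},\mathrm{sc},\mathrm{ss}\}$: $\mathrm{c}$: $U_i$ a clique, $R_i=U_i$; $\mathrm{sc}$: $U_i$ independent, $R_i=U_i$; $\mathrm{ss}$: a center $c_i\in U_i$ adjacent to all other vertices of $U_i$, no other internal edges, $R_i=\{c_i\}$. Central type "complete": for all $i\ne l$, all edges between $R_i$ and $R_l$; "star toward $j$": for each $i\ne j$ all edges between $R_i$ and $R_j$, and no other edges between different parts. (Every graph in $\mathcal{O}(K_{n_1,\dots,n_k})$ is of one of the three case forms.) *)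

theory Defs
  imports Main
begin

(* Graphs on a vertex set V are edge predicates E :: 'a => 'a => bool,
   which are False outside V (all graphs below have this property). *)

definition vertices :: "nat \<Rightarrow> (nat \<Rightarrow> 'a set) \<Rightarrow> 'a set" where
  "vertices k U = (\<Union>i<k. U i)"

definition complete_multipartite :: "nat \<Rightarrow> (nat \<Rightarrow> 'a set) \<Rightarrow> 'a \<Rightarrow> 'a \<Rightarrow> bool" where
  "complete_multipartite k U x y =
     (\<exists>i<k. \<exists>l<k. i \<noteq> l \<and> x \<in> U i \<and> y \<in> U l)"

definition local_comp :: "'a \<Rightarrow> ('a \<Rightarrow> 'a \<Rightarrow> bool) \<Rightarrow> 'a \<Rightarrow> 'a \<Rightarrow> bool" where
  "local_comp v E x y =
     (if x \<noteq> y \<and> E v x \<and> E v y then \<not> E x y else E x y)"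

inductive_set lc_orbit :: "'a set \<Rightarrow> ('a \<Rightarrow> 'a \<Rightarrow> bool) \<Rightarrow> ('a \<Rightarrow> 'a \<Rightarrow> bool) set"
  for V :: "'a set" and G :: "'a \<Rightarrow> 'a \<Rightarrow> bool" where
  base: "G \<in> lc_orbit V G"
| step: "H \<in> lc_orbit V G \<Longrightarrow> v \<in> V \<Longrightarrow> local_comp v H \<in> lc_orbit V G"

datatype ptype = C | SC | SS

datatype ctype = Complete | Star nat

definition Rset :: "(nat \<Rightarrow> 'a set) \<Rightarrow> (nat \<Rightarrow> ptype) \<Rightarrow> (nat \<Rightarrow> 'a) \<Rightarrow> nat \<Rightarrow> 'a set" where
  "Rset U t c i = (if t i = SS then {c i} else U i)"

(* the graph Gamma(central type; types t_i), with centers c i for the ss parts *)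
definition Gamma :: "nat \<Rightarrow> (nat \<Rightarrow> 'a set) \<Rightarrow> ctype \<Rightarrow> (nat \<Rightarrow> ptype) \<Rightarrow> (nat \<Rightarrow> 'a)
    \<Rightarrow> 'a \<Rightarrow> 'a \<Rightarrow> bool" where
  "Gamma k U ct t c x y =
     ((\<exists>i<k. x \<in> U i \<and> y \<in> U i \<and> x \<noteq> y \<and>
         (case t i of C \<Rightarrow> True | SC \<Rightarrow> False | SS \<Rightarrow> x = c i \<or> y = c i))
    \<or> (\<exists>i<k. \<exists>l<k. i \<noteq> l \<and> x \<in> U i \<and> y \<in> U l \<and>
         (case ct of
            Complete \<Rightarrow> x \<in> Rset U t c i \<and> y \<in> Rset U t c l
          | Star j \<Rightarrow> (l = j \<and> x \<in> Rset U t c i \<and> y \<in> Rset U t c j)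
                    \<or> (i = j \<and> x \<in> Rset U t c j \<and> y \<in> Rset U t c l))))"

(* the three case forms; the index j is ignored in case 1 *)
definition case_types :: "nat \<Rightarrow> nat \<Rightarrow> nat set \<Rightarrow> nat \<Rightarrow> ptype" where
  "case_types cs j I i =
     (if cs = 1 then (if i \<in> I then SS else SC)
      else if i = j then (if cs = 2 then SC else C)
      else if i \<in> I then SS else C)"

definition case_ctype :: "nat \<Rightarrow> nat \<Rightarrow> ctype" where
  "case_ctype cs j = (if cs = 1 then Complete else Star j)"

definition case_graph :: "nat \<Rightarrow> (nat \<Rightarrow> 'a set) \<Rightarrow> nat \<Rightarrow> nat \<Rightarrow> nat set \<Rightarrow> (nat \<Rightarrow> 'a)
    \<Rightarrow> 'a \<Rightarrow> 'a \<Rightarrow> bool" where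
  "case_graph k U cs j I c = Gamma k U (case_ctype cs j) (case_types cs j I) c"

definition case_params :: "nat \<Rightarrow> (nat \<Rightarrow> 'a set) \<Rightarrow> nat \<Rightarrow> nat \<Rightarrow> nat set \<Rightarrow> (nat \<Rightarrow> 'a) \<Rightarrow> bool" where
  "case_params k U cs j I c =
     (I \<subseteq> {..<k} \<and> (cs \<noteq> 1 \<longrightarrow> j < k \<and> j \<notin> I) \<and> (\<forall>i\<in>I. c i \<in> U i))"

definition graph_iso :: "'a set \<Rightarrow> ('a \<Rightarrow> 'a \<Rightarrow> bool) \<Rightarrow> ('a \<Rightarrow> 'a \<Rightarrow> bool) \<Rightarrow> bool" where
  "graph_iso V E E' = (\<exists>f. bij_betw f V V \<and> (\<forall>x\<in>V. \<forall>y\<in>V. E x y = E' (f x) (f y)))"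

end

theory Submission
  imports Defs "HOL-Library.Disjoint_Sets"
begin

(* Gamma only depends on the part types, the central type and the centres.  Hence a
   permutation sigma of the part indices that carries I to I' (and j to j' in cases 2 and 3),
   combined with bijections U i -> U (sigma i) sending each centre to the corresponding centre,
   is an isomorphism.  Such a sigma exists because card I = card I', and the part bijections
   exist because all parts have n elements. *)

lemma ex_bij_betw_image_eq:
  assumes "finite S" "finite S'" "card S = card S'" "A \<subseteq> S" "B \<subseteq> S'" "card A = card B"
  shows "\<exists>s. bij_betw s S S' \<and> s ` A = B"
proof -
  have "finite A" "finite B"
    using assms finite_subset by auto
  then obtain h where h: "bij_betw h A B"
    using finite_same_card_bij assms(6) by blast
  have "card (S - A) = card (S' - B)"
    using assms \<open>finite A\<close> \<open>finite B\<close> by (simp add: card_Diff_subset)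
  then obtain h' where h': "bij_betw h' (S - A) (S' - B)"
    using finite_same_card_bij assms(1,2) by (meson finite_Diff)
  have "bij_betw (\<lambda>x. if x \<in> A then h x else h' x) (A \<union> (S - A)) (B \<union> (S' - B))"
    using h h' by (rule bij_betw_disjoint_Un) auto
  moreover have "A \<union> (S - A) = S" "B \<union> (S' - B) = S'"
    using assms by auto
  moreover have "(\<lambda>x. if x \<in> A then h x else h' x) ` A = B"
    using h by (auto simp: bij_betw_def)
  ultimately show ?thesis by metis
qed

lemma ex_bij_betw_image_eq_point:
  assumes "finite S" "finite S'" "card S = card S'" "A \<subseteq> S - {a}" "B \<subseteq> S' - {b}"
    "card A = card B" "a \<in> S" "b \<in> S'"
  shows "\<exists>s. bij_betw s S S' \<and> s ` A = B \<and> s a = b"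
proof -
  obtain s where s: "bij_betw s (S - {a}) (S' - {b})" "s ` A = B"
    using ex_bij_betw_image_eq[of "S - {a}" "S' - {b}" A B] assms by auto
  have "bij_betw (s(a := b)) S S'"
    using s(1) assms(7,8) unfolding bij_betw_def inj_on_def by (auto simp: image_iff)
  moreover have "(s(a := b)) ` A = B"
    using s(2) assms(4) by auto
  ultimately show ?thesis by (metis fun_upd_same)
qed

lemma Gamma_same_part:
  assumes "disjoint_family_on U {..<k}" "a < k" "x \<in> U a" "y \<in> U a"
  shows "Gamma k U ct t c x y \<longleftrightarrow>
    x \<noteq> y \<and> (case t a of C \<Rightarrow> True | SC \<Rightarrow> False | SS \<Rightarrow> x = c a \<or> y = c a)"
proof -
  have "x \<in> U i \<longleftrightarrow> i = a" "y \<in> U i \<longleftrightarrow> i = a" if "i < k" for i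
    using assms that by (auto dest: disjoint_family_onD)
  then show ?thesis
    using assms(2) unfolding Gamma_def by (simp cong: conj_cong)
qed

lemma Gamma_different_parts:
  assumes "disjoint_family_on U {..<k}" "a < k" "b < k" "a \<noteq> b" "x \<in> U a" "y \<in> U b"
  shows "Gamma k U ct t c x y \<longleftrightarrow>
    (case ct of
       Complete \<Rightarrow> x \<in> Rset U t c a \<and> y \<in> Rset U t c b
     | Star j \<Rightarrow> (b = j \<and> x \<in> Rset U t c a \<and> y \<in> Rset U t c j)
               \<or> (a = j \<and> x \<in> Rset U t c j \<and> y \<in> Rset U t c b))"
proof -
  have "x \<in> U i \<longleftrightarrow> i = a" "y \<in> U i \<longleftrightarrow> i = b" if "i < k" for i
    using assms that by (auto dest: disjoint_family_onD)
  then show ?thesis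
    using assms(2-4) unfolding Gamma_def by (simp cong: conj_cong)
qed

lemma Rset_bij_betw_iff:
  assumes "bij_betw h (U a) (U b)" "t' b = t a" "t a = SS \<Longrightarrow> c a \<in> U a \<and> c' b = h (c a)"
    and "x \<in> U a"
  shows "h x \<in> Rset U t' c' b \<longleftrightarrow> x \<in> Rset U t c a"
  using assms unfolding Rset_def bij_betw_def inj_on_def by auto

locale part_relabelling =
  fixes k :: nat and U :: "nat \<Rightarrow> 'a set" and \<sigma> :: "nat \<Rightarrow> nat" and g :: "nat \<Rightarrow> 'a \<Rightarrow> 'a"
  assumes disjoint: "disjoint_family_on U {..<k}"
    and perm: "bij_betw \<sigma> {..<k} {..<k}"
    and part_bij: "\<And>i. i < k \<Longrightarrow> bij_betw (g i) (U i) (U (\<sigma> i))"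
begin

definition relabel :: "'a \<Rightarrow> 'a" where
  "relabel x = g (THE i. i < k \<and> x \<in> U i) x"

lemma relabel_eq:
  assumes "i < k" "x \<in> U i"
  shows "relabel x = g i x"
proof -
  have "(THE i. i < k \<and> x \<in> U i) = i"
    using assms disjoint by (auto dest: disjoint_family_onD)
  then show ?thesis
    by (simp add: relabel_def)
qed

lemma perm_lessThan: "i < k \<Longrightarrow> \<sigma> i < k"
  using perm by (auto simp: bij_betw_def)

lemma perm_eq_iff: "i < k \<Longrightarrow> l < k \<Longrightarrow> \<sigma> i = \<sigma> l \<longleftrightarrow> i = l"
  using perm by (auto simp: bij_betw_def inj_on_def)

lemma bij_betw_relabel: "bij_betw relabel (vertices k U) (vertices k U)"
proof -
  have "disjoint_family_on (\<lambda>i. U (\<sigma> i)) {..<k}"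
    using disjoint perm_lessThan perm_eq_iff unfolding disjoint_family_on_def by (metis lessThan_iff)
  moreover have "bij_betw relabel (U i) (U (\<sigma> i))" if "i < k" for i
    using part_bij[OF that] relabel_eq[OF that] bij_betw_cong by metis
  ultimately have "bij_betw relabel (\<Union>i<k. U i) (\<Union>i<k. U (\<sigma> i))"
    by (rule bij_betw_UNION_disjoint) simp
  moreover have "(\<Union>i<k. U (\<sigma> i)) = (\<Union>i<k. U i)"
    using perm by (metis bij_betw_imp_surj_on image_image)
  ultimately show ?thesis
    by (simp add: vertices_def)
qed

lemma Gamma_relabel:
  assumes types: "\<And>i. i < k \<Longrightarrow> t' (\<sigma> i) = t i"
    and centers: "\<And>i. i < k \<Longrightarrow> t i = SS \<Longrightarrow> c i \<in> U i \<and> c' (\<sigma> i) = g i (c i)"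
    and ctype: "ct' = (case ct of Complete \<Rightarrow> Complete | Star j \<Rightarrow> Star (\<sigma> j))"
    and star: "\<And>j. ct = Star j \<Longrightarrow> j < k"
    and "a < k" "x \<in> U a" "b < k" "y \<in> U b"
  shows "Gamma k U ct' t' c' (relabel x) (relabel y) = Gamma k U ct t c x y"
proof -
  have x': "relabel x = g a x" "g a x \<in> U (\<sigma> a)" "\<sigma> a < k"
    using assms(5,6) relabel_eq part_bij bij_betwE perm_lessThan by blast+
  have y': "relabel y = g b y" "g b y \<in> U (\<sigma> b)" "\<sigma> b < k"
    using assms(7,8) relabel_eq part_bij bij_betwE perm_lessThan by blast+
  have Rx: "g a x \<in> Rset U t' c' (\<sigma> a) \<longleftrightarrow> x \<in> Rset U t c a"
    using assms(5,6) by (intro Rset_bij_betw_iff part_bij types centers)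
  have Ry: "g b y \<in> Rset U t' c' (\<sigma> b) \<longleftrightarrow> y \<in> Rset U t c b"
    using assms(7,8) by (intro Rset_bij_betw_iff part_bij types centers)
  show ?thesis
  proof (cases "a = b")
    case True
    have "inj_on (g a) (U a)"
      using part_bij[OF assms(5)] by (rule bij_betw_imp_inj_on)
    then have inj: "g a x = g a y \<longleftrightarrow> x = y" "t a = SS \<Longrightarrow> g a x = c' (\<sigma> a) \<longleftrightarrow> x = c a"
      "t a = SS \<Longrightarrow> g a y = c' (\<sigma> a) \<longleftrightarrow> y = c a"
      using assms(5,6,8) True centers by (auto dest: inj_onD)
    have "Gamma k U ct' t' c' (g a x) (g a y) \<longleftrightarrow>
        g a x \<noteq> g a y \<and> (case t a of C \<Rightarrow> True | SC \<Rightarrow> False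
          | SS \<Rightarrow> g a x = c' (\<sigma> a) \<or> g a y = c' (\<sigma> a))"
      using Gamma_same_part[OF disjoint x'(3,2), of "g a y" ct' t' c'] y'(2) types[OF assms(5)]
      unfolding True by simp
    also have "\<dots> \<longleftrightarrow> Gamma k U ct t c x y"
      using Gamma_same_part[OF disjoint assms(5,6), of y ct t c] assms(8) True inj
      by (cases "t a") simp_all
    finally show ?thesis
      using x'(1) y'(1) True by simp
  next
    case False
    then have "\<sigma> a \<noteq> \<sigma> b"
      using assms(5,7) perm_eq_iff by blast
    note edges = Gamma_different_parts[OF disjoint x'(3) y'(3) this x'(2) y'(2)]
      Gamma_different_parts[OF disjoint assms(5,7) False assms(6,8)]
    have "Gamma k U ct' t' c' (g a x) (g b y) = Gamma k U ct t c x y"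
    proof (cases ct)
      case Complete
      then show ?thesis
        using edges Rx Ry ctype by simp
    next
      case (Star j)
      then have "\<sigma> a = \<sigma> j \<longleftrightarrow> a = j" "\<sigma> b = \<sigma> j \<longleftrightarrow> b = j"
        using perm_eq_iff star assms(5,7) by blast+
      then show ?thesis
        using edges Rx Ry ctype Star by auto
    qed
    then show ?thesis
      using x'(1) y'(1) by simp
  qed
qed

lemma graph_iso_Gamma:
  assumes "\<And>i. i < k \<Longrightarrow> t' (\<sigma> i) = t i"
    and "\<And>i. i < k \<Longrightarrow> t i = SS \<Longrightarrow> c i \<in> U i \<and> c' (\<sigma> i) = g i (c i)"
    and "ct' = (case ct of Complete \<Rightarrow> Complete | Star j \<Rightarrow> Star (\<sigma> j))"
    and "\<And>j. ct = Star j \<Longrightarrow> j < k"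
  shows "graph_iso (vertices k U) (Gamma k U ct t c) (Gamma k U ct' t' c')"
  unfolding graph_iso_def
proof (intro exI conjI ballI)
  show "bij_betw relabel (vertices k U) (vertices k U)"
    by (rule bij_betw_relabel)
  fix x y
  assume "x \<in> vertices k U" "y \<in> vertices k U"
  then obtain a b where "a < k" "x \<in> U a" "b < k" "y \<in> U b"
    by (auto simp: vertices_def)
  with assms show "Gamma k U ct t c x y = Gamma k U ct' t' c' (relabel x) (relabel y)"
    by (rule Gamma_relabel[symmetric])
qed

end

lemma ex_perm_case_params:
  assumes "case_params k U cs j I c" "case_params k U cs j' I' c'" "card I = card I'"
  shows "\<exists>\<sigma>. bij_betw \<sigma> {..<k} {..<k} \<and> \<sigma> ` I = I' \<and> (cs \<noteq> 1 \<longrightarrow> \<sigma> j = j')"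
proof (cases "cs = 1")
  case True
  then show ?thesis
    using ex_bij_betw_image_eq[of "{..<k}" "{..<k}" I I'] assms by (auto simp: case_params_def)
next
  case False
  then show ?thesis
    using ex_bij_betw_image_eq_point[of "{..<k}" "{..<k}" I j I' j'] assms
    by (auto simp: case_params_def)
qed

lemma case_types_perm:
  assumes "bij_betw \<sigma> {..<k} {..<k}" "I \<subseteq> {..<k}" "\<sigma> ` I = I'"
    and "cs \<noteq> 1 \<Longrightarrow> j < k \<and> \<sigma> j = j'" "i < k"
  shows "case_types cs j' I' (\<sigma> i) = case_types cs j I i"
proof -
  have inj: "inj_on \<sigma> {..<k}"
    using assms(1) by (rule bij_betw_imp_inj_on)
  then have "\<sigma> i \<in> I' \<longleftrightarrow> i \<in> I"
    using inj_on_image_mem_iff[OF inj _ assms(2)] assms(3,5) by simp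
  moreover have "\<sigma> i = j' \<longleftrightarrow> i = j" if "cs \<noteq> 1"
    using assms(4)[OF that] assms(5) inj by (auto dest: inj_onD)
  ultimately show ?thesis
    unfolding case_types_def by auto
qed

lemma ex_part_bijections:
  assumes "\<And>i. i < k \<Longrightarrow> finite (U i) \<and> card (U i) = n" "bij_betw \<sigma> {..<k} {..<k}"
    and "I \<subseteq> {..<k}" "\<forall>i\<in>I. c i \<in> U i" "\<forall>i\<in>\<sigma> ` I. c' i \<in> U i"
  shows "\<exists>g. \<forall>i<k. bij_betw (g i) (U i) (U (\<sigma> i)) \<and> (i \<in> I \<longrightarrow> g i (c i) = c' (\<sigma> i))"
proof -
  have "\<exists>h. bij_betw h (U i) (U (\<sigma> i)) \<and> (i \<in> I \<longrightarrow> h (c i) = c' (\<sigma> i))" if "i < k" for i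
  proof -
    have "\<sigma> i < k"
      using assms(2) that by (metis bij_betwE lessThan_iff)
    then have parts: "finite (U i)" "finite (U (\<sigma> i))" "card (U i) = card (U (\<sigma> i))"
      using assms(1) that by auto
    show ?thesis
    proof (cases "i \<in> I")
      case True
      then show ?thesis
        using ex_bij_betw_image_eq_point[OF parts, of "{}" "c i" "{}" "c' (\<sigma> i)"] assms(4,5)
        by auto
    next
      case False
      then show ?thesis
        using finite_same_card_bij[OF parts] by blast
    qed
  qed
  then show ?thesis
    by metis
qed

theorem lemma7:
  fixes U :: "nat \<Rightarrow> 'a set" and k n cs j j' :: nat and I I' :: "nat set"
    and c c' :: "nat \<Rightarrow> 'a" and G G' :: "'a \<Rightarrow> 'a \<Rightarrow> bool"
  assumes "k \<ge> 3" and "n \<ge> 2"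
    and "\<forall>i<k. finite (U i) \<and> card (U i) = n"
    and "\<forall>i<k. \<forall>l<k. i \<noteq> l \<longrightarrow> U i \<inter> U l = {}"
    and "G \<in> lc_orbit (vertices k U) (complete_multipartite k U)"
    and "G' \<in> lc_orbit (vertices k U) (complete_multipartite k U)"
    and "cs \<in> {1, 2, 3}"
    and "case_params k U cs j I c" and "G = case_graph k U cs j I c"
    and "case_params k U cs j' I' c'" and "G' = case_graph k U cs j' I' c'"
    and "card I = card I'"
  shows "graph_iso (vertices k U) G G'"
proof -
  have disjoint: "disjoint_family_on U {..<k}"
    using assms(4) by (auto simp: disjoint_family_on_def)
  have params: "I \<subseteq> {..<k}" "\<forall>i\<in>I. c i \<in> U i" "cs \<noteq> 1 \<Longrightarrow> j < k \<and> j \<notin> I"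
    "\<forall>i\<in>I'. c' i \<in> U i"
    using assms(8,10) by (auto simp: case_params_def)
  obtain \<sigma> where \<sigma>: "bij_betw \<sigma> {..<k} {..<k}" "\<sigma> ` I = I'" "cs \<noteq> 1 \<longrightarrow> \<sigma> j = j'"
    using ex_perm_case_params[OF assms(8,10,12)] by blast
  obtain g where g: "\<forall>i<k. bij_betw (g i) (U i) (U (\<sigma> i)) \<and> (i \<in> I \<longrightarrow> g i (c i) = c' (\<sigma> i))"
    using ex_part_bijections[OF _ \<sigma>(1) params(1,2) params(4)[folded \<sigma>(2)]] assms(3) by blast
  interpret part_relabelling k U \<sigma> g
    using disjoint \<sigma>(1) g by (simp add: part_relabelling_def)
  show ?thesis
    unfolding assms(9,11) case_graph_def
  proof (rule graph_iso_Gamma)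
    show "case_types cs j' I' (\<sigma> i) = case_types cs j I i" if "i < k" for i
      using \<sigma>(3) params(3) by (intro case_types_perm[OF \<sigma>(1) params(1) \<sigma>(2) _ that]) auto
    show "c i \<in> U i \<and> c' (\<sigma> i) = g i (c i)" if "i < k" "case_types cs j I i = SS" for i
      using that g params by (auto simp: case_types_def split: if_splits)
    show "case_ctype cs j' = (case case_ctype cs j of Complete \<Rightarrow> Complete | Star j \<Rightarrow> Star (\<sigma> j))"
      using \<sigma>(3) by (simp add: case_ctype_def)
    show "j0 < k" if "case_ctype cs j = Star j0" for j0
      using that params by (auto simp: case_ctype_def split: if_splits)
  qed
qed

end
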